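(* Let $V$ be a space. The following are equivalent: (i) $V$ is homothetic to $\overline{V}$; (ii) $V$ is homothetic to $\langle 1,\tau\rangle_{\mathbb{Q}}$ for some $\tau$ with $|\tau|^2\in\mathbb{Q}$.
   Context: A space is a $2$-dimensional $\mathbb{Q}$-vector subspace $V\subset\mathbb{C}$ containing two $\mathbb{R}$-linearly independent vectors; $\langle 1,\tau\rangle_{\mathbb{Q}}=\mathbb{Q}+\mathbb{Q}\tau$. Spaces $V_1,V_2$ are homothetic if $V_2=\lambda V_1$ for some $\lambda\in\mathbb{C}^*$. $\overline{V}$ is the complex conjugate of $V$. *)

theory Defs
  imports Complex_Main
begin

definition qspan :: "complex \<Rightarrow> complex \<Rightarrow> complex set" where
  "qspan a b = {of_rat p * a + of_rat q * b | p q. True}"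

definition Q_indep :: "complex \<Rightarrow> complex \<Rightarrow> bool" where
  "Q_indep a b \<longleftrightarrow> (\<forall>p q :: rat. of_rat p * a + of_rat q * b = 0 \<longrightarrow> p = 0 \<and> q = 0)"

definition R_indep :: "complex \<Rightarrow> complex \<Rightarrow> bool" where
  "R_indep a b \<longleftrightarrow> (\<forall>r s :: real. of_real r * a + of_real s * b = 0 \<longrightarrow> r = 0 \<and> s = 0)"

definition is_space :: "complex set \<Rightarrow> bool" where
  "is_space V \<longleftrightarrow> (\<exists>a b. Q_indep a b \<and> V = qspan a b) \<and> (\<exists>u\<in>V. \<exists>v\<in>V. R_indep u v)"

definition homothetic :: "complex set \<Rightarrow> complex set \<Rightarrow> bool" where
  "homothetic V W \<longleftrightarrow> (\<exists>l. l \<noteq> 0 \<and> W = (\<lambda>z. l * z) ` V)"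

end

theory Submission
  imports Defs
begin

text \<open>
  If \<open>cnj ` V = \<mu> V\<close>, then \<open>\<sigma> w = cnj w / \<mu>\<close> is a \<open>\<rat>\<close>-linear self-map of \<open>V\<close> with
  \<open>\<sigma> (\<sigma> w) = w / \<bar>\<mu>\<bar>\<^sup>2\<close>. Since a basis \<open>a, b\<close> of \<open>V\<close> has non-real ratio, \<open>V\<close> meets the real
  line through \<open>a\<close> only in \<open>\<rat> a\<close>, so \<open>1 / \<bar>\<mu>\<bar>\<^sup>2\<close> is rational. If every \<open>w\<close> were an
  eigenvector of \<open>\<sigma>\<close>, then \<open>\<sigma>\<close> would be a rational scalar and \<open>cnj\<close> would fix \<open>b / a\<close>; so some
  \<open>w, \<sigma> w\<close> is a \<open>\<rat>\<close>-basis of \<open>V\<close>, i.e. \<open>V = w \<langle>1, \<tau>\<rangle>\<close> with \<open>\<tau> = \<sigma> w / w\<close> and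
  \<open>\<bar>\<tau>\<bar>\<^sup>2 = 1 / \<bar>\<mu>\<bar>\<^sup>2\<close>. Conversely, if \<open>\<bar>\<tau>\<bar>\<^sup>2 = n\<close> is rational then \<open>cnj \<tau> = n / \<tau>\<close> and
  \<open>\<langle>1, n / \<tau>\<rangle> = \<langle>\<tau>, 1\<rangle> / \<tau>\<close>.
\<close>

lemma of_real_of_rat: "complex_of_real (of_rat r) = of_rat r"
  by (cases r) (simp add: of_rat_rat)

lemma cnj_of_rat [simp]: "cnj (of_rat r) = of_rat r"
  by (metis Reals_cnj_iff Reals_of_real of_real_of_rat)

lemma qspan_memI: "of_rat p * a + of_rat q * b \<in> qspan a b"
  unfolding qspan_def by auto

lemma qspan_memE:
  assumes "x \<in> qspan a b"
  obtains p q where "x = of_rat p * a + of_rat q * b"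
  using assms unfolding qspan_def by auto

lemma qspan_left: "a \<in> qspan a b"
  using qspan_memI [of 1 a 0 b] by simp

lemma qspan_right: "b \<in> qspan a b"
  using qspan_memI [of 0 a 1 b] by simp

lemma qspan_subset_iff: "qspan a b \<subseteq> qspan x y \<longleftrightarrow> a \<in> qspan x y \<and> b \<in> qspan x y"
proof (intro iffI subsetI)
  show "qspan a b \<subseteq> qspan x y \<Longrightarrow> a \<in> qspan x y \<and> b \<in> qspan x y"
    using qspan_left qspan_right by blast
next
  fix z assume "a \<in> qspan x y \<and> b \<in> qspan x y" and "z \<in> qspan a b"
  then obtain p1 q1 p2 q2 r s where
    "a = of_rat p1 * x + of_rat q1 * y" "b = of_rat p2 * x + of_rat q2 * y"
    "z = of_rat r * a + of_rat s * b"
    by (metis qspan_memE)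
  then have "z = of_rat (r * p1 + s * p2) * x + of_rat (r * q1 + s * q2) * y"
    by (simp add: of_rat_add of_rat_mult algebra_simps)
  then show "z \<in> qspan x y"
    by (simp add: qspan_memI)
qed

lemma of_rat_mult_in_qspanD:
  assumes "of_rat c * z \<in> qspan x y" "c \<noteq> 0"
  shows "z \<in> qspan x y"
proof -
  obtain p q where "of_rat c * z = of_rat p * x + of_rat q * y"
    using assms(1) by (rule qspan_memE)
  then have "z = of_rat (p / c) * x + of_rat (q / c) * y"
    using assms(2) by (simp add: of_rat_divide field_simps)
  then show ?thesis
    by (simp add: qspan_memI)
qed

lemma qspan_commute: "qspan a b = qspan b a"
  by (simp add: subset_antisym qspan_subset_iff qspan_left qspan_right)

lemma qspan_scale_right:
  assumes "c \<noteq> 0"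
  shows "qspan a (of_rat c * b) = qspan a b"
proof -
  have "of_rat c * b \<in> qspan a b"
    using qspan_memI [of 0 a c b] by simp
  moreover have "b \<in> qspan a (of_rat c * b)"
    using of_rat_mult_in_qspanD [OF qspan_right assms] .
  ultimately show ?thesis
    by (simp add: subset_antisym qspan_subset_iff qspan_left qspan_right)
qed

lemma qspan_eq_range: "qspan a b = range (\<lambda>(p, q). of_rat p * a + of_rat q * b)"
  unfolding qspan_def by auto

lemma image_qspan:
  assumes "\<And>p q x y. f (of_rat p * x + of_rat q * y) = of_rat p * f x + of_rat q * f y"
  shows "f ` qspan a b = qspan (f a) (f b)"
  unfolding qspan_eq_range image_image by (simp add: assms case_prod_beta)

lemma image_mult_qspan: "(\<lambda>z. l * z) ` qspan a b = qspan (l * a) (l * b)"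
  by (rule image_qspan) (simp add: algebra_simps)

lemma image_cnj_qspan: "cnj ` qspan a b = qspan (cnj a) (cnj b)"
  by (rule image_qspan) simp

lemma Q_indep_combination_nonzero:
  "Q_indep a b \<Longrightarrow> p \<noteq> 0 \<or> q \<noteq> 0 \<Longrightarrow> of_rat p * a + of_rat q * b \<noteq> 0"
  unfolding Q_indep_def by blast

lemma rat_multiple_if_not_Q_indep:
  assumes "w \<noteq> 0" "\<not> Q_indep w z"
  obtains c where "z = of_rat c * w"
proof -
  obtain p q where pq: "of_rat p * w + of_rat q * z = 0" "p \<noteq> 0 \<or> q \<noteq> 0"
    using assms(2) unfolding Q_indep_def by auto
  with assms(1) have "q \<noteq> 0"
    by auto
  with pq(1) have "z = of_rat (- p / q) * w"
    by (simp add: of_rat_divide of_rat_minus field_simps add_eq_0_iff)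
  then show thesis ..
qed

lemma qspan_eq_if_Q_indep:
  assumes xy: "Q_indep x y" and "x \<in> qspan a b" "y \<in> qspan a b"
  shows "qspan x y = qspan a b"
proof -
  obtain p1 q1 p2 q2 where x: "x = of_rat p1 * a + of_rat q1 * b"
    and y: "y = of_rat p2 * a + of_rat q2 * b"
    using assms(2,3) by (metis qspan_memE)
  define D where "D = p1 * q2 - p2 * q1"
  have Da: "of_rat D * a = of_rat q2 * x + of_rat (- q1) * y"
    unfolding x y D_def by (simp add: of_rat_diff of_rat_mult of_rat_minus algebra_simps)
  have Db: "of_rat D * b = of_rat (- p2) * x + of_rat p1 * y"
    unfolding x y D_def by (simp add: of_rat_diff of_rat_mult of_rat_minus algebra_simps)
  have "D \<noteq> 0"
  proof
    assume "D = 0"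
    with Da Db xy have "p1 = 0" "q1 = 0"
      by (metis Q_indep_combination_nonzero mult_zero_left neg_equal_0_iff_equal of_rat_0)+
    then have "x = 0"
      using x by simp
    with Q_indep_combination_nonzero [OF xy, of 1 0] show False
      by simp
  qed
  with Da Db have "a \<in> qspan x y" "b \<in> qspan x y"
    by (metis of_rat_mult_in_qspanD qspan_memI)+
  with assms(2,3) show ?thesis
    by (simp add: subset_antisym qspan_subset_iff)
qed

lemma homothetic_image_mult: "l \<noteq> 0 \<Longrightarrow> homothetic V ((\<lambda>z. l * z) ` V)"
  unfolding homothetic_def by blast

lemma homothetic_refl: "homothetic V V"
  unfolding homothetic_def by (rule exI [of _ 1]) simp

lemma homothetic_sym:
  assumes "homothetic V W"
  shows "homothetic W V"
proof -
  obtain l where "l \<noteq> 0" "W = (\<lambda>z. l * z) ` V"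
    using assms unfolding homothetic_def by blast
  then have "V = (\<lambda>z. inverse l * z) ` W"
    by (simp add: image_image mult.assoc [symmetric])
  with \<open>l \<noteq> 0\<close> show ?thesis
    by (simp add: homothetic_image_mult)
qed

lemma homothetic_trans:
  assumes "homothetic U V" "homothetic V W"
  shows "homothetic U W"
proof -
  obtain l m where "l \<noteq> 0" "V = (\<lambda>z. l * z) ` U" "m \<noteq> 0" "W = (\<lambda>z. m * z) ` V"
    using assms unfolding homothetic_def by blast
  then have "W = (\<lambda>z. (m * l) * z) ` U"
    by (simp add: image_image mult.assoc)
  with \<open>l \<noteq> 0\<close> \<open>m \<noteq> 0\<close> show ?thesis
    by (simp add: homothetic_image_mult)
qed

lemma homothetic_image_cnj:
  assumes "homothetic V W"
  shows "homothetic (cnj ` V) (cnj ` W)"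
proof -
  obtain l where "l \<noteq> 0" "W = (\<lambda>z. l * z) ` V"
    using assms unfolding homothetic_def by blast
  then have "cnj ` W = (\<lambda>z. cnj l * z) ` cnj ` V"
    by (simp add: image_image)
  with \<open>l \<noteq> 0\<close> show ?thesis
    by (simp add: homothetic_image_mult)
qed

lemma homothetic_qspan_1_cnj:
  assumes "(cmod \<tau>)\<^sup>2 \<in> \<rat>"
  shows "homothetic (qspan 1 \<tau>) (qspan 1 (cnj \<tau>))"
proof (cases "\<tau> = 0")
  case True
  then show ?thesis
    by (simp add: homothetic_refl)
next
  case False
  obtain n where n: "(cmod \<tau>)\<^sup>2 = of_rat n"
    using assms by (rule Rats_cases)
  with False have "n \<noteq> 0"
    by auto
  have "\<tau> * cnj \<tau> = of_rat n"
    by (metis complex_norm_square n of_real_of_rat)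
  with False have "cnj \<tau> = of_rat n * inverse \<tau>"
    by (simp add: field_simps)
  then have "qspan 1 (cnj \<tau>) = qspan (inverse \<tau> * \<tau>) (inverse \<tau> * 1)"
    using False \<open>n \<noteq> 0\<close> by (simp add: qspan_scale_right)
  also have "\<dots> = (\<lambda>z. inverse \<tau> * z) ` qspan 1 \<tau>"
    by (simp add: image_mult_qspan qspan_commute)
  finally show ?thesis
    using False by (simp add: homothetic_image_mult)
qed

lemma homothetic_cnj_if_qspan_1:
  assumes "(cmod \<tau>)\<^sup>2 \<in> \<rat>" "homothetic V (qspan 1 \<tau>)"
  shows "homothetic V (cnj ` V)"
proof -
  have "homothetic (qspan 1 (cnj \<tau>)) (cnj ` V)"
    using homothetic_image_cnj [OF homothetic_sym [OF assms(2)]]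
    by (simp add: image_cnj_qspan)
  with assms show ?thesis
    by (meson homothetic_qspan_1_cnj homothetic_trans)
qed

lemma not_real_ratio_if_R_indep:
  assumes "a \<noteq> 0" "u \<in> qspan a b" "v \<in> qspan a b" "R_indep u v"
  shows "b / a \<notin> \<real>"
proof
  assume "b / a \<in> \<real>"
  then obtain r where "b / a = of_real r"
    by (rule Reals_cases)
  with assms(1) have r: "b = of_real r * a"
    by (simp add: field_simps)
  have real_multiple: "\<exists>s. w = of_real s * a" if w: "w \<in> qspan a b" for w
  proof -
    obtain p q where "w = of_rat p * a + of_rat q * b"
      using w by (rule qspan_memE)
    then have "w = of_real (of_rat p + of_rat q * r) * a"
      by (simp add: r distrib_right of_real_of_rat)
    then show ?thesis ..
  qed
  obtain s t where s: "u = of_real s * a" and "v = of_real t * a"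
    using real_multiple assms(2,3) by blast
  then have "of_real t * u + of_real (- s) * v = 0"
    by simp
  with assms(4) have "- s = 0"
    unfolding R_indep_def by blast
  then have "of_real 1 * u + of_real 0 * v = 0"
    by (simp add: s)
  with assms(4) have "(1::real) = 0"
    unfolding R_indep_def by blast
  then show False
    by simp
qed

lemma Rats_if_of_real_mult_in_qspan:
  assumes "a \<noteq> 0" "b / a \<notin> \<real>" "of_real r * a \<in> qspan a b"
  shows "r \<in> \<rat>"
proof -
  obtain p q where pq: "of_real r * a = of_rat p * a + of_rat q * b"
    using assms(3) by (rule qspan_memE)
  have "q = 0"
  proof (rule ccontr)
    assume "q \<noteq> 0"
    with pq assms(1) have "b / a = of_real ((r - of_rat p) / of_rat q)"
      by (simp add: field_simps flip: of_real_of_rat)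
    with assms(2) show False
      by simp
  qed
  with pq assms(1) have "of_real r = (of_real (of_rat p) :: complex)"
    by (simp add: of_real_of_rat)
  then show ?thesis
    by simp
qed

lemma exists_Q_indep_cnj_div:
  assumes ab: "Q_indep a b" and not_real: "b / a \<notin> \<real>" and "\<mu> \<noteq> 0"
  shows "\<exists>w \<in> qspan a b. Q_indep w (cnj w / \<mu>)"
proof (rule ccontr)
  assume "\<not> ?thesis"
  then have eigen: "\<exists>c. cnj w / \<mu> = of_rat c * w" if "w \<in> qspan a b" "w \<noteq> 0" for w
    using that by (metis rat_multiple_if_not_Q_indep)
  have "a \<noteq> 0" "b \<noteq> 0" "a + b \<noteq> 0"
    using Q_indep_combination_nonzero [OF ab, of 1 0] Q_indep_combination_nonzero [OF ab, of 0 1]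
      Q_indep_combination_nonzero [OF ab, of 1 1] by simp_all
  moreover have "a + b \<in> qspan a b"
    using qspan_memI [of 1 a 1 b] by simp
  ultimately obtain c1 c2 c3 where c1: "cnj a / \<mu> = of_rat c1 * a"
    and c2: "cnj b / \<mu> = of_rat c2 * b" and c3: "cnj (a + b) / \<mu> = of_rat c3 * (a + b)"
    using eigen qspan_left qspan_right by metis
  then have "of_rat (c1 - c3) * a + of_rat (c2 - c3) * b = 0"
    by (simp add: of_rat_diff add_divide_distrib algebra_simps)
  with ab have "c1 - c3 = 0" "c2 - c3 = 0"
    unfolding Q_indep_def by blast+
  then have "c2 = c1"
    by simp
  have "c1 \<noteq> 0"
    using c1 \<open>a \<noteq> 0\<close> \<open>\<mu> \<noteq> 0\<close> by auto
  have "cnj (b / a) = (cnj b / \<mu>) / (cnj a / \<mu>)"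
    using \<open>\<mu> \<noteq> 0\<close> by simp
  also have "\<dots> = b / a"
    using \<open>c1 \<noteq> 0\<close> by (simp add: c1 c2 \<open>c2 = c1\<close>)
  finally show False
    using not_real by (simp add: Reals_cnj_iff)
qed

lemma cnj_div_mem_if_image_cnj:
  assumes "cnj ` V = (\<lambda>z. \<mu> * z) ` V" "\<mu> \<noteq> 0" "w \<in> V"
  shows "cnj w / \<mu> \<in> V"
proof -
  obtain w' where "w' \<in> V" "cnj w = \<mu> * w'"
    using assms(1,3) by (metis image_eqI imageE)
  with assms(2) show ?thesis
    by simp
qed

lemma Rats_inverse_norm_square_if_image_cnj:
  assumes "a \<noteq> 0" "b / a \<notin> \<real>" "\<mu> \<noteq> 0"
    and \<mu>: "cnj ` qspan a b = (\<lambda>z. \<mu> * z) ` qspan a b"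
  shows "inverse ((cmod \<mu>)\<^sup>2) \<in> \<rat>"
proof -
  have "of_real (inverse ((cmod \<mu>)\<^sup>2)) * a = a / (\<mu> * cnj \<mu>)"
    by (simp only: complex_norm_square [symmetric] of_real_inverse divide_inverse mult.commute)
  also have "\<dots> = cnj (cnj a / \<mu>) / \<mu>"
    by simp
  also have "\<dots> \<in> qspan a b"
    using \<mu> \<open>\<mu> \<noteq> 0\<close> by (intro cnj_div_mem_if_image_cnj qspan_left)
  finally show ?thesis
    using Rats_if_of_real_mult_in_qspan assms(1,2) by blast
qed

lemma homothetic_qspan_1_if_homothetic_cnj:
  assumes "is_space V" "homothetic V (cnj ` V)"
  shows "\<exists>\<tau>. (cmod \<tau>)\<^sup>2 \<in> \<rat> \<and> homothetic V (qspan 1 \<tau>)"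
proof -
  obtain a b u v where ab: "Q_indep a b" and V: "V = qspan a b"
    and uv: "u \<in> V" "v \<in> V" "R_indep u v"
    using assms(1) unfolding is_space_def by blast
  have "a \<noteq> 0"
    using Q_indep_combination_nonzero [OF ab, of 1 0] by simp
  with uv V have not_real: "b / a \<notin> \<real>"
    using not_real_ratio_if_R_indep by blast
  obtain \<mu> where "\<mu> \<noteq> 0" and \<mu>: "cnj ` V = (\<lambda>z. \<mu> * z) ` V"
    using assms(2) unfolding homothetic_def by blast
  with \<open>a \<noteq> 0\<close> not_real V have rat: "inverse ((cmod \<mu>)\<^sup>2) \<in> \<rat>"
    using Rats_inverse_norm_square_if_image_cnj by blast
  obtain w where w: "w \<in> V" "Q_indep w (cnj w / \<mu>)"
    using exists_Q_indep_cnj_div [OF ab not_real \<open>\<mu> \<noteq> 0\<close>] V by blast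
  then have "w \<noteq> 0"
    using Q_indep_combination_nonzero [of w _ 1 0] by auto
  define \<tau> where "\<tau> = cnj w / \<mu> / w"
  have "V = qspan w (cnj w / \<mu>)"
    using qspan_eq_if_Q_indep w cnj_div_mem_if_image_cnj [OF \<mu> \<open>\<mu> \<noteq> 0\<close>] V by simp
  also have "\<dots> = (\<lambda>z. w * z) ` qspan 1 \<tau>"
    unfolding \<tau>_def image_mult_qspan using \<open>w \<noteq> 0\<close> by simp
  finally have "homothetic (qspan 1 \<tau>) V"
    using \<open>w \<noteq> 0\<close> by (simp add: homothetic_image_mult)
  moreover have "(cmod \<tau>)\<^sup>2 = inverse ((cmod \<mu>)\<^sup>2)"
    unfolding \<tau>_def using \<open>w \<noteq> 0\<close> by (simp add: norm_divide norm_mult power_divide field_simps)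
  ultimately show ?thesis
    using rat homothetic_sym by metis
qed

theorem lemma4p4:
  assumes "is_space V"
  shows "homothetic V (cnj ` V) \<longleftrightarrow>
         (\<exists>\<tau>. (cmod \<tau>)^2 \<in> \<rat> \<and> homothetic V (qspan 1 \<tau>))"
  using homothetic_qspan_1_if_homothetic_cnj [OF assms] homothetic_cnj_if_qspan_1 by blast

end
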